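(* Let $A$ be a square matrix. If some principal submatrix $A[\kappa]$ of $A$ is Hurwitz-stable but is not a $P^-_0$ matrix, then $A$ is $D$-Hopf.
   Context: A square matrix is Hurwitz-stable if all its eigenvalues have negative real part and Hurwitz-unstable if at least one eigenvalue has positive real part. A matrix is a $P^-_0$ matrix if every nonzero $k\times k$ principal minor has sign $(-1)^k$ (for all $k$). Inertia: numbers of eigenvalues with negative, positive, zero real part. $A[\kappa]$ is the principal submatrix indexed by $\kappa$. $A$ is $D$-Hopf if there exist an invertible $k\times k$ principal submatrix $A[\kappa]$ and positive diagonal $D_1,D_2$ with $\operatorname{inertia}(A[\kappa]D_1)\ne\operatorname{inertia}(A[\kappa]D_2)$. *)

theory Defs
  imports "Jordan_Normal_Form.Char_Poly" "Jordan_Normal_Form.DL_Submatrix"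
begin

(* Real square matrices are represented as 'real mat' (Jordan_Normal_Form), indices 0..<n.
   Eigenvalues are taken over the complex numbers. *)

definition cmat :: "real mat \<Rightarrow> complex mat" where
  "cmat B = map_mat complex_of_real B"

definition principal_submatrix :: "real mat \<Rightarrow> nat set \<Rightarrow> real mat" where
  "principal_submatrix A \<kappa> = submatrix A \<kappa> \<kappa>"

definition hurwitz_stable :: "real mat \<Rightarrow> bool" where
  "hurwitz_stable B \<longleftrightarrow> (\<forall>z. eigenvalue (cmat B) z \<longrightarrow> Re z < 0)"

definition eig_count :: "real mat \<Rightarrow> (complex \<Rightarrow> bool) \<Rightarrow> nat" where
  "eig_count B P = (\<Sum>z\<in>{z. poly (char_poly (cmat B)) z = 0 \<and> P z}. order z (char_poly (cmat B)))"

definition inertia :: "real mat \<Rightarrow> nat \<times> nat \<times> nat" where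
  "inertia B = (eig_count B (\<lambda>z. Re z < 0), eig_count B (\<lambda>z. Re z > 0), eig_count B (\<lambda>z. Re z = 0))"

definition P0_minus :: "real mat \<Rightarrow> bool" where
  "P0_minus B \<longleftrightarrow> (\<forall>\<kappa>. \<kappa> \<subseteq> {0..<dim_row B} \<longrightarrow> \<kappa> \<noteq> {} \<longrightarrow>
      det (principal_submatrix B \<kappa>) \<noteq> 0 \<longrightarrow>
      sgn (det (principal_submatrix B \<kappa>)) = (-1) ^ card \<kappa>)"

definition pos_diag :: "nat \<Rightarrow> real mat \<Rightarrow> bool" where
  "pos_diag k D \<longleftrightarrow> D \<in> carrier_mat k k \<and> diagonal_mat D \<and> (\<forall>i<k. D $$ (i,i) > 0)"

definition D_Hopf :: "real mat \<Rightarrow> bool" where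
  "D_Hopf A \<longleftrightarrow> (\<exists>\<kappa> D1 D2. \<kappa> \<subseteq> {0..<dim_row A} \<and> \<kappa> \<noteq> {} \<and>
      det (principal_submatrix A \<kappa>) \<noteq> 0 \<and>
      pos_diag (card \<kappa>) D1 \<and> pos_diag (card \<kappa>) D2 \<and>
      inertia (principal_submatrix A \<kappa> * D1) \<noteq> inertia (principal_submatrix A \<kappa> * D2))"

end

theory Submission
  imports Defs
begin

text \<open>
  Let \<open>B = A[\<kappa>]\<close>; being Hurwitz-stable, it is invertible and has no eigenvalue with positive
  real part. A principal minor \<open>det B[I]\<close> of the wrong sign means \<open>det (y I - B[I]) < 0\<close> for
  small \<open>y > 0\<close>, i.e. \<open>det (I - x B[I]) < 0\<close> for some \<open>x > 0\<close>. By Sylvester's determinant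
  identity this is \<open>det (I - B E)\<close>, where the diagonal matrix \<open>E \<ge> 0\<close> has entry \<open>x\<close> on \<open>I\<close> and
  \<open>0\<close> elsewhere. Along a path of positive diagonal matrices \<open>D t\<close> from \<open>0\<close> to \<open>E\<close>, the value
  \<open>det (I - B D t)\<close> moves from \<open>1\<close> to a negative number, so it vanishes somewhere; there \<open>1\<close> is
  an eigenvalue of \<open>B D t\<close>, so the inertia of \<open>B D t\<close> differs from that of \<open>B\<close>.
\<close>

lemma continuous_on_det:
  fixes M :: "'b::topological_space \<Rightarrow> 'a::real_normed_field mat"
  assumes "\<And>t. t \<in> S \<Longrightarrow> M t \<in> carrier_mat n n"
    and "\<And>i j. i < n \<Longrightarrow> j < n \<Longrightarrow> continuous_on S (\<lambda>t. M t $$ (i, j))"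
  shows "continuous_on S (\<lambda>t. det (M t))"
proof -
  have "continuous_on S (\<lambda>t. \<Sum>p\<in>{p. p permutes {0..<n}}. signof p * (\<Prod>i=0..<n. M t $$ (i, p i)))"
    by (intro continuous_intros assms(2)) (auto simp: permutes_in_image)
  moreover have "det (M t) = (\<Sum>p\<in>{p. p permutes {0..<n}}. signof p * (\<Prod>i=0..<n. M t $$ (i, p i)))"
    if "t \<in> S" for t
    using det_def' assms(1)[OF that] by blast
  ultimately show ?thesis using continuous_on_cong by force
qed

lemma isCont_neg_obtain_pos:
  fixes f :: "real \<Rightarrow> real"
  assumes "isCont f 0" and "f 0 < 0"
  obtains y where "0 < y" and "f y < 0"
proof -
  have "\<forall>\<^sub>F y in at_right 0. f y < 0"
    using assms by (metis continuous_at_split continuous_within order_tendstoD(2))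
  moreover have "\<forall>\<^sub>F y in at_right 0. (0::real) < y" by (rule eventually_at_right_less)
  ultimately show ?thesis
    using that eventually_happens' trivial_limit_at_right_real eventually_conj by blast
qed

lemma det_one_minus_mult_commute:
  fixes X :: "'a::idom mat"
  assumes X: "X \<in> carrier_mat k m" and Y: "Y \<in> carrier_mat m k"
  shows "det (1\<^sub>m k - X * Y) = det (1\<^sub>m m - Y * X)"
proof -
  let ?M = "four_block_mat (1\<^sub>m k) X Y (1\<^sub>m m)"
  let ?L1 = "four_block_mat (1\<^sub>m k) (0\<^sub>m k m) Y (1\<^sub>m m)"
  let ?R1 = "four_block_mat (1\<^sub>m k) X (0\<^sub>m m k) (1\<^sub>m m - Y * X)"
  let ?L2 = "four_block_mat (1\<^sub>m k) X (0\<^sub>m m k) (1\<^sub>m m)"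
  let ?R2 = "four_block_mat (1\<^sub>m k - X * Y) (0\<^sub>m k m) Y (1\<^sub>m m)"
  have YX: "1\<^sub>m m - Y * X \<in> carrier_mat m m" and XY: "1\<^sub>m k - X * Y \<in> carrier_mat k k"
    using X Y by auto
  have "det (1\<^sub>m m - Y * X) = det ?L1 * det ?R1"
    using det_four_block_mat_upper_right_zero[OF one_carrier_mat refl Y one_carrier_mat]
      det_four_block_mat_lower_left_zero[OF one_carrier_mat X refl YX] by simp
  also have "\<dots> = det (?L1 * ?R1)"
    using X Y by (intro det_mult[symmetric, of _ "k + m"]) auto
  also have "?L1 * ?R1 = ?M"
    using X Y by (subst mult_four_block_mat[of _ k k _ m _ m]) auto
  also have "?M = ?L2 * ?R2"
    using X Y by (subst mult_four_block_mat[of _ k k _ m _ m]) auto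
  also have "det (?L2 * ?R2) = det ?L2 * det ?R2"
    using X Y by (intro det_mult[of _ "k + m"]) auto
  also have "\<dots> = det (1\<^sub>m k - X * Y)"
    using det_four_block_mat_lower_left_zero[OF one_carrier_mat X refl one_carrier_mat]
      det_four_block_mat_upper_right_zero[OF XY refl Y one_carrier_mat] by simp
  finally show ?thesis ..
qed

lemma bij_betw_pick:
  assumes "finite I"
  shows "bij_betw (pick I) {..<card I} I"
proof (rule bij_betw_imageI)
  show "inj_on (pick I) {..<card I}"
    by (rule strict_mono_on_imp_inj_on) (auto intro: strict_mono_onI pick_mono)
  show "pick I ` {..<card I} = I"
  proof
    show "pick I ` {..<card I} \<subseteq> I" using pick_in_set by blast
    show "I \<subseteq> pick I ` {..<card I}"
    proof
      fix i assume "i \<in> I"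
      then have "card {a\<in>I. a < i} < card I" and "pick I (card {a\<in>I. a < i}) = i"
        using assms by (auto intro: psubset_card_mono pick_card_in_set)
      then show "i \<in> pick I ` {..<card I}" by force
    qed
  qed
qed

lemma pick_less:
  assumes "I \<subseteq> {0..<n}" and "a < card I"
  shows "pick I a < n"
  using assms pick_in_set by fastforce

lemma principal_submatrix_carrier:
  assumes "A \<in> carrier_mat n n" and "I \<subseteq> {0..<n}"
  shows "principal_submatrix A I \<in> carrier_mat (card I) (card I)"
proof -
  have "{i. i < n \<and> i \<in> I} = I" using assms(2) by auto
  then show ?thesis using assms(1) by (simp add: principal_submatrix_def submatrix_def)
qed

text \<open>\<open>pick I a\<close> is the \<open>a\<close>-th smallest element of \<open>I\<close>, counting from \<open>0\<close>.\<close>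

definition selection_mat :: "nat \<Rightarrow> nat set \<Rightarrow> 'a::zero_neq_one mat" where
  "selection_mat n I = mat (card I) n (\<lambda>(a, j). of_bool (j = pick I a))"

lemma selection_mat_carrier[simp]: "selection_mat n I \<in> carrier_mat (card I) n"
  by (simp add: selection_mat_def)

lemma selection_mat_mult:
  fixes B :: "'a::semiring_1 mat"
  assumes "B \<in> carrier_mat n nc" and "I \<subseteq> {0..<n}"
  shows "selection_mat n I * B = mat (card I) nc (\<lambda>(a, j). B $$ (pick I a, j))"
proof (rule eq_matI)
  fix a j assume "a < dim_row (mat (card I) nc (\<lambda>(a, j). B $$ (pick I a, j)))"
    and "j < dim_col (mat (card I) nc (\<lambda>(a, j). B $$ (pick I a, j)))"
  with pick_less[OF assms(2)]
  show "(selection_mat n I * B) $$ (a, j) = mat (card I) nc (\<lambda>(a, j). B $$ (pick I a, j)) $$ (a, j)"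
    using assms(1) by (auto simp: selection_mat_def scalar_prod_def)
qed (use assms in \<open>auto simp: selection_mat_def\<close>)

lemma mult_transpose_selection_mat:
  fixes B :: "'a::semiring_1 mat"
  assumes "B \<in> carrier_mat nr n" and "I \<subseteq> {0..<n}"
  shows "B * transpose_mat (selection_mat n I) = mat nr (card I) (\<lambda>(i, b). B $$ (i, pick I b))"
proof (rule eq_matI)
  fix i b assume "i < dim_row (mat nr (card I) (\<lambda>(i, b). B $$ (i, pick I b)))"
    and "b < dim_col (mat nr (card I) (\<lambda>(i, b). B $$ (i, pick I b)))"
  with pick_less[OF assms(2)]
  show "(B * transpose_mat (selection_mat n I)) $$ (i, b) = mat nr (card I) (\<lambda>(i, b). B $$ (i, pick I b)) $$ (i, b)"
    using assms(1) by (auto simp: selection_mat_def scalar_prod_def)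
qed (use assms in \<open>auto simp: selection_mat_def\<close>)

lemma selection_mat_mult_mult_transpose:
  fixes B :: "'a::semiring_1 mat"
  assumes "B \<in> carrier_mat n n" and "I \<subseteq> {0..<n}"
  shows "selection_mat n I * B * transpose_mat (selection_mat n I) = submatrix B I I"
proof -
  have "{i. i < n \<and> i \<in> I} = I" using assms(2) by auto
  then show ?thesis using assms
    by (intro eq_matI)
      (auto simp: selection_mat_mult mult_transpose_selection_mat[of _ "card I"] submatrix_def pick_less)
qed

lemma transpose_selection_mat_mult_selection_mat:
  assumes "I \<subseteq> {0..<n}"
  shows "transpose_mat (selection_mat n I) * selection_mat n I
    = (mat_diag n (\<lambda>j. of_bool (j \<in> I)) :: 'a::semiring_1 mat)"
proof (rule eq_matI)
  have fin: "finite I" using assms finite_subset by blast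
  fix i j assume "i < dim_row (mat_diag n (\<lambda>j. of_bool (j \<in> I)) :: 'a mat)"
    and "j < dim_col (mat_diag n (\<lambda>j. of_bool (j \<in> I)) :: 'a mat)"
  then have ij: "i < n" "j < n" by (auto simp: mat_diag_def)
  have "(transpose_mat (selection_mat n I) * selection_mat n I) $$ (i, j)
      = (\<Sum>a<card I. of_bool (i = pick I a) * of_bool (j = pick I a) :: 'a)"
    using ij by (simp add: selection_mat_def scalar_prod_def lessThan_atLeast0)
  also have "\<dots> = (\<Sum>p\<in>I. of_bool (i = p) * of_bool (j = p))"
    using sum.reindex_bij_betw[OF bij_betw_pick[OF fin], of "\<lambda>p. of_bool (i = p) * of_bool (j = p) :: 'a"]
    by simp
  also have "\<dots> = (mat_diag n (\<lambda>j. of_bool (j \<in> I)) :: 'a mat) $$ (i, j)"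
    using ij fin by (auto simp: mat_diag_def)
  finally show "(transpose_mat (selection_mat n I) * selection_mat n I) $$ (i, j)
      = (mat_diag n (\<lambda>j. of_bool (j \<in> I)) :: 'a mat) $$ (i, j)" .
qed (auto simp: mat_diag_def selection_mat_def)

lemma det_one_minus_mult_mat_diag_indicator:
  fixes B :: "'a::idom mat"
  assumes B: "B \<in> carrier_mat n n" and I: "I \<subseteq> {0..<n}"
  shows "det (1\<^sub>m n - B * mat_diag n (\<lambda>j. of_bool (j \<in> I) * x))
    = det (1\<^sub>m (card I) - x \<cdot>\<^sub>m submatrix B I I)"
proof -
  let ?P = "selection_mat n I :: 'a mat"
  have P: "?P \<in> carrier_mat (card I) n" and Pt: "transpose_mat ?P \<in> carrier_mat n (card I)"
    by auto
  have "mat_diag n (\<lambda>j. of_bool (j \<in> I) * x) = x \<cdot>\<^sub>m (transpose_mat ?P * ?P)"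
    unfolding transpose_selection_mat_mult_selection_mat[OF I]
    by (intro eq_matI) (auto simp: mat_diag_def)
  also have "B * \<dots> = x \<cdot>\<^sub>m (B * transpose_mat ?P * ?P)"
    using B P Pt by (simp add: mult_smult_distrib[OF B mult_carrier_mat[OF Pt P]] assoc_mult_mat[OF B Pt P])
  also have "\<dots> = (B * transpose_mat ?P) * (x \<cdot>\<^sub>m ?P)"
    using B P Pt by (simp add: mult_smult_distrib[OF mult_carrier_mat[OF B Pt] P])
  finally have "det (1\<^sub>m n - B * mat_diag n (\<lambda>j. of_bool (j \<in> I) * x))
      = det (1\<^sub>m (card I) - (x \<cdot>\<^sub>m ?P) * (B * transpose_mat ?P))"
    using B P Pt by (simp add: det_one_minus_mult_commute[of _ n "card I"])
  also have "(x \<cdot>\<^sub>m ?P) * (B * transpose_mat ?P) = x \<cdot>\<^sub>m submatrix B I I"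
    using B P Pt by (simp add: mult_smult_assoc_mat[OF P mult_carrier_mat[OF B Pt]] assoc_mult_mat[OF P B Pt]
        selection_mat_mult_mult_transpose[OF B I, symmetric])
  finally show ?thesis .
qed

lemma obtain_det_one_minus_smult_neg:
  fixes C :: "real mat"
  assumes C: "C \<in> carrier_mat m m" and neg: "(-1) ^ m * det C < 0"
  obtains x where "0 < x" and "det (1\<^sub>m m - x \<cdot>\<^sub>m C) < 0"
proof -
  define q where "q y = det (y \<cdot>\<^sub>m 1\<^sub>m m - C)" for y
  have "continuous_on UNIV q"
    unfolding q_def using C by (intro continuous_on_det[of _ _ m]) (auto intro!: continuous_intros)
  moreover have "q 0 < 0"
  proof -
    have "0 \<cdot>\<^sub>m 1\<^sub>m m - C = (-1) \<cdot>\<^sub>m C" using C by (intro eq_matI) auto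
    then show ?thesis using C neg by (simp add: q_def)
  qed
  ultimately obtain y where y: "0 < y" "q y < 0"
    using isCont_neg_obtain_pos[of q] by (metis continuous_on_eq_continuous_at open_UNIV UNIV_I)
  have "1\<^sub>m m - (1 / y) \<cdot>\<^sub>m C = (1 / y) \<cdot>\<^sub>m (y \<cdot>\<^sub>m 1\<^sub>m m - C)"
    using C y by (intro eq_matI) (auto simp: field_simps)
  then have "det (1\<^sub>m m - (1 / y) \<cdot>\<^sub>m C) = (1 / y) ^ m * q y"
    using C by (simp add: q_def)
  also have "\<dots> < 0" using y by (simp add: mult_pos_neg)
  finally show ?thesis using y by (intro that[of "1 / y"]) simp_all
qed

lemma not_P0_minusE:
  assumes "B \<in> carrier_mat n n" and "\<not> P0_minus B"
  obtains I where "I \<subseteq> {0..<n}" and "(-1) ^ card I * det (principal_submatrix B I) < 0"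
proof -
  obtain I where I: "I \<subseteq> {0..<n}" and "det (principal_submatrix B I) \<noteq> 0"
    and "sgn (det (principal_submatrix B I)) \<noteq> (-1) ^ card I"
    using assms unfolding P0_minus_def by auto
  then have "(-1) ^ card I * det (principal_submatrix B I) < 0"
    by (cases "even (card I)") (auto simp: sgn_if mult_less_0_iff split: if_splits)
  with I that show ?thesis by blast
qed

lemma not_P0_minus_obtain_nonneg_diag:
  assumes B: "B \<in> carrier_mat n n" and "\<not> P0_minus B"
  obtains d where "\<And>j. 0 \<le> d j" and "det (1\<^sub>m n - B * mat_diag n d) < 0"
proof -
  obtain I where I: "I \<subseteq> {0..<n}" and "(-1) ^ card I * det (principal_submatrix B I) < 0"
    using not_P0_minusE assms by blast
  then obtain x where "0 < x" and "det (1\<^sub>m (card I) - x \<cdot>\<^sub>m principal_submatrix B I) < 0"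
    using obtain_det_one_minus_smult_neg principal_submatrix_carrier[OF B I] by blast
  then show ?thesis
    using that[of "\<lambda>j. of_bool (j \<in> I) * x"] det_one_minus_mult_mat_diag_indicator[OF B I]
    by (simp add: principal_submatrix_def)
qed

lemma obtain_pos_diag_det_one_minus_mult_eq_0:
  fixes B :: "real mat"
  assumes B: "B \<in> carrier_mat n n" and d: "\<And>j. 0 \<le> d j"
    and neg: "det (1\<^sub>m n - B * mat_diag n d) < 0"
  obtains D where "pos_diag n D" and "det (1\<^sub>m n - B * D) = 0"
proof -
  txt \<open>The diagonal \<open>e t\<close> is \<open>0\<close> at \<open>t = 0\<close>, \<open>d\<close> at \<open>t = 1\<close>, and positive in between.\<close>
  define e where "e = (\<lambda>t j. t * d j + t * (1 - t))"
  define h where "h t = det (1\<^sub>m n - B * mat_diag n (e t))" for t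
  have carrier: "1\<^sub>m n - B * mat_diag n f \<in> carrier_mat n n" for f
    using B by (simp add: minus_carrier_mat)
  have entries: "(1\<^sub>m n - B * mat_diag n f) $$ (i, j) = of_bool (i = j) - B $$ (i, j) * f j"
    if "i < n" "j < n" for f i j
    using B that by (simp add: mat_diag_mult_right[OF B])
  have "continuous_on {0..1} h"
    unfolding h_def e_def using B
    by (intro continuous_on_det[of _ _ n]) (auto simp: carrier entries intro!: continuous_intros)
  moreover have "h 0 = 1"
  proof -
    have "mat_diag n (e 0) = 0\<^sub>m n n"
      by (intro eq_matI) (auto simp: mat_diag_def e_def)
    then have "1\<^sub>m n - B * mat_diag n (e 0) = 1\<^sub>m n"
      using B by (intro eq_matI) auto
    then show ?thesis by (simp add: h_def)
  qed
  moreover have "h 1 < 0" using neg by (simp add: h_def e_def)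
  ultimately obtain t where t: "0 \<le> t" "t \<le> 1" "h t = 0"
    using IVT2'[of h 1 0 0] by auto
  with \<open>h 0 = 1\<close> \<open>h 1 < 0\<close> have "0 < t" "t < 1" by (auto simp: le_less)
  then have "e t j > 0" for j
    using d[of j] by (simp add: e_def add_nonneg_pos)
  then have "pos_diag n (mat_diag n (e t))"
    by (auto simp: pos_diag_def diagonal_mat_def mat_diag_def)
  with t that show ?thesis by (auto simp: h_def)
qed

lemma eigenvalue_cmat_iff_det_char_matrix:
  assumes "M \<in> carrier_mat n n"
  shows "eigenvalue (cmat M) (complex_of_real e) \<longleftrightarrow> det (char_matrix M e) = 0"
proof -
  have "char_matrix (cmat M) (complex_of_real e) = cmat (char_matrix M e)"
    using assms by (intro eq_matI) (auto simp: char_matrix_def cmat_def)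
  moreover have "cmat M \<in> carrier_mat n n" using assms by (simp add: cmat_def)
  ultimately show ?thesis
    by (simp add: eigenvalue_det cmat_def)
qed

lemma hurwitz_stable_imp_det_nonzero:
  assumes "M \<in> carrier_mat n n" and "hurwitz_stable M"
  shows "det M \<noteq> 0"
proof -
  have "char_matrix M 0 = M" using assms(1) by (intro eq_matI) (auto simp: char_matrix_def)
  then show ?thesis
    using assms eigenvalue_cmat_iff_det_char_matrix[OF assms(1), of 0] by (force simp: hurwitz_stable_def)
qed

lemma det_one_minus_eq_0_imp_eigenvalue_one:
  assumes "M \<in> carrier_mat n n" and "det (1\<^sub>m n - M) = 0"
  shows "eigenvalue (cmat M) 1"
proof -
  have "char_matrix M 1 = - (1\<^sub>m n - M)" using assms(1) by (intro eq_matI) (auto simp: char_matrix_def)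
  moreover have "1\<^sub>m n - M \<in> carrier_mat n n" using assms(1) by (rule minus_carrier_mat)
  ultimately have "det (char_matrix M 1) = 0" using assms(2) det_0_negate by metis
  then show ?thesis using eigenvalue_cmat_iff_det_char_matrix[OF assms(1), of 1] by simp
qed

lemma eig_count_eq_0:
  assumes "M \<in> carrier_mat n n" and "\<And>z. eigenvalue (cmat M) z \<Longrightarrow> \<not> P z"
  shows "eig_count M P = 0"
proof -
  have "cmat M \<in> carrier_mat n n" using assms(1) by (simp add: cmat_def)
  then have no_roots: "{z. poly (char_poly (cmat M)) z = 0 \<and> P z} = {}"
    using assms(2) eigenvalue_root_char_poly by blast
  show ?thesis unfolding eig_count_def no_roots by simp
qed

lemma eig_count_pos:
  assumes "M \<in> carrier_mat n n" and "eigenvalue (cmat M) z" and "P z"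
  shows "0 < eig_count M P"
proof -
  let ?p = "char_poly (cmat M)"
  have cM: "cmat M \<in> carrier_mat n n" using assms(1) by (simp add: cmat_def)
  then have root: "poly ?p z = 0" using assms(2) eigenvalue_root_char_poly by blast
  have "?p \<noteq> 0" using degree_monic_char_poly[OF cM] by auto
  then have "finite {z. poly ?p z = 0 \<and> P z}" by (simp add: poly_roots_finite)
  moreover have "0 < order z ?p" using root \<open>?p \<noteq> 0\<close> order_root by blast
  ultimately have "0 < (\<Sum>w\<in>{z. poly ?p z = 0 \<and> P z}. order w ?p)"
    using root assms(3) by (intro sum_pos2[of _ z]) auto
  then show ?thesis by (simp add: eig_count_def)
qed

theorem mainTheorem5:
  fixes A :: "real mat" and n :: nat and \<kappa> :: "nat set"
  assumes "A \<in> carrier_mat n n"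
    and "\<kappa> \<subseteq> {0..<n}" and "\<kappa> \<noteq> {}"
    and "hurwitz_stable (principal_submatrix A \<kappa>)"
    and "\<not> P0_minus (principal_submatrix A \<kappa>)"
  shows "D_Hopf A"
proof -
  define B where "B = principal_submatrix A \<kappa>"
  define k where "k = card \<kappa>"
  have B: "B \<in> carrier_mat k k"
    unfolding B_def k_def using assms(1,2) by (rule principal_submatrix_carrier)
  obtain d where "\<And>j. 0 \<le> d j" and "det (1\<^sub>m k - B * mat_diag k d) < 0"
    using not_P0_minus_obtain_nonneg_diag[OF B] assms(5) B_def by blast
  then obtain D where D: "pos_diag k D" and "det (1\<^sub>m k - B * D) = 0"
    using obtain_pos_diag_det_one_minus_mult_eq_0[OF B] by blast
  then have "eigenvalue (cmat (B * D)) 1"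
    using B by (intro det_one_minus_eq_0_imp_eigenvalue_one[of _ k]) (auto simp: pos_diag_def)
  then have "0 < eig_count (B * D) (\<lambda>z. 0 < Re z)"
    using B D by (intro eig_count_pos[of _ k]) (auto simp: pos_diag_def)
  moreover have "eig_count (B * 1\<^sub>m k) (\<lambda>z. 0 < Re z) = 0"
    using B assms(4) by (intro eig_count_eq_0[of _ k]) (auto simp: B_def hurwitz_stable_def)
  ultimately have "inertia (B * 1\<^sub>m k) \<noteq> inertia (B * D)"
    by (auto simp: inertia_def)
  moreover have "det B \<noteq> 0"
    using B assms(4) B_def hurwitz_stable_imp_det_nonzero by blast
  moreover have "pos_diag k (1\<^sub>m k)"
    by (simp add: pos_diag_def diagonal_mat_def)
  ultimately show ?thesis
    unfolding D_Hopf_def using assms(1-3) D by (auto simp: B_def k_def)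
qed

end
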